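(* Let $N\ge2$, $\lambda>0$, $\lambda'>0$, $\mu\in\mathbb R$, $\sigma>0$. Let $\Delta S_1\sim\mathcal N(\mu,\sigma^2)$ and $\hat\mu\sim\mathcal N(\mu,\sigma^2/N)$ be independent, and define $a_{\mathrm{plug\text{-}in}}:=\hat\mu/(\lambda\sigma^2)$ and $a_{\mathrm{u\text{-}a}}:=\frac{\lambda N}{\lambda N+\lambda'}a_{\mathrm{plug\text{-}in}}$. Then $\mathrm{MeanVar}_\lambda(a_{\mathrm{u\text{-}a}}\Delta S_1)>\mathrm{MeanVar}_\lambda(a_{\mathrm{plug\text{-}in}}\Delta S_1)$ if and only if \[ \mu^2\,\frac{(N-1)\lambda'-2N\lambda}{2N\lambda+\lambda'}<\sigma^2. \] In particular this holds whenever $\lambda'<\frac{2N}{N-1}\lambda$.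
   Context: $\mathrm{MeanVar}_\lambda(X):=\mathbb E[X]-\frac\lambda2\mathbb V[X]$, with expectation and variance under the joint law of $(\hat\mu,\Delta S_1)$; this is the out-of-sample performance measure. Here $\hat\mu$ is the sample-mean drift estimate from $N$ past i.i.d. $\mathcal N(\mu,\sigma^2)$ increments, $\Delta S_1$ the next increment, $a_{\mathrm{plug\text{-}in}}$ the plug-in policy and $a_{\mathrm{u\text{-}a}}$ the entropic uncertainty-aware policy (uncertainty aversion $\lambda'$) for the entropic objective with risk aversion $\lambda$, with the variance treated as known. *)

theory Defs
  imports "HOL-Probability.Probability"
begin

definition MeanVar :: "'a measure \<Rightarrow> real \<Rightarrow> ('a \<Rightarrow> real) \<Rightarrow> real" where
  "MeanVar M lam X =
     (integral\<^sup>L M X) - lam / 2 * (integral\<^sup>L M (\<lambda>w. (X w - integral\<^sup>L M X)\<^sup>2))"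

definition a_plugin :: "real \<Rightarrow> real \<Rightarrow> real \<Rightarrow> real" where
  "a_plugin lam sig muhat = muhat / (lam * sig\<^sup>2)"

definition a_ua :: "nat \<Rightarrow> real \<Rightarrow> real \<Rightarrow> real \<Rightarrow> real \<Rightarrow> real" where
  "a_ua N lam lam' sig muhat = (lam * real N) / (lam * real N + lam') * a_plugin lam sig muhat"

end

theory Submission
  imports Defs
begin

text \<open>Both policies are deterministic multiples of \<open>Z = muhat \<cdot> dS\<close>: the plug-in position is
  \<open>k Z\<close> with \<open>k = 1 / (\<lambda> \<sigma>\<^sup>2)\<close>, the uncertainty-aware one is \<open>c k Z\<close> with
  \<open>c = \<lambda> N / (\<lambda> N + \<lambda>') < 1\<close>. As \<open>MeanVar\<close> of \<open>k Z\<close> is the concave quadratic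
  \<open>k E[Z] - \<lambda>/2 k\<^sup>2 V[Z]\<close> in \<open>k\<close>, the shrunk position is better iff
  \<open>2 E[Z] < \<lambda> (1 + c) k V[Z]\<close>. Independence gives \<open>E[Z] = \<mu>\<^sup>2\<close> and
  \<open>E[Z\<^sup>2] = (\<mu>\<^sup>2 + \<sigma>\<^sup>2/N)(\<mu>\<^sup>2 + \<sigma>\<^sup>2)\<close>, which turns this into an inequality linear
  in \<open>\<mu>\<^sup>2\<close> and \<open>\<sigma>\<^sup>2\<close>.\<close>

lemma (in prob_space) variance_mult_const:
  "variance (\<lambda>x. c * X x) = c\<^sup>2 * variance (X :: 'a \<Rightarrow> real)"
proof -
  have "(\<lambda>x. (c * X x - c * expectation X)\<^sup>2) = (\<lambda>x. c\<^sup>2 * (X x - expectation X)\<^sup>2)"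
    by (simp add: power_mult_distrib flip: right_diff_distrib)
  then show ?thesis
    by simp
qed

lemma (in prob_space) MeanVar_mult_const:
  "MeanVar M lam (\<lambda>x. c * X x) = c * expectation X - lam / 2 * c\<^sup>2 * variance X"
  using variance_mult_const[of c X] by (simp add: MeanVar_def)

lemma (in prob_space) normal_distributed_second_moment:
  assumes s: "0 < s" and D: "distributed M lborel X (normal_density m s)"
  shows "integrable M X" "integrable M (\<lambda>x. (X x)\<^sup>2)"
    and "expectation (\<lambda>x. (X x)\<^sup>2) = m\<^sup>2 + s\<^sup>2"
proof -
  show int1: "integrable M X"
    using distributed_integrable[OF D, of "\<lambda>x. x"] integrable_normal_moment_nz_1[OF s] by simp
  have "integrable M (\<lambda>x. (X x - m) ^ 2)"
    using distributed_integrable[OF D, of "\<lambda>x. (x - m) ^ 2"] integrable_normal_moment[OF s, of m 2]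
    by simp
  moreover have "(\<lambda>x. (X x)\<^sup>2) = (\<lambda>x. (X x - m)\<^sup>2 + 2 * m * X x - m\<^sup>2)"
    by (simp add: power2_eq_square algebra_simps)
  ultimately show int2: "integrable M (\<lambda>x. (X x)\<^sup>2)"
    using int1 by simp
  show "expectation (\<lambda>x. (X x)\<^sup>2) = m\<^sup>2 + s\<^sup>2"
    using variance_eq[OF int1 int2] normal_distributed_variance[OF s D]
      normal_distributed_expectation[OF s D] by simp
qed

lemma (in prob_space) indep_var_product_moments:
  fixes X Y :: "'a \<Rightarrow> real"
  assumes ind: "indep_var borel X borel Y"
    and X: "integrable M X" "integrable M (\<lambda>x. (X x)\<^sup>2)"
    and Y: "integrable M Y" "integrable M (\<lambda>x. (Y x)\<^sup>2)"
  shows "expectation (\<lambda>x. X x * Y x) = expectation X * expectation Y"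
    and "variance (\<lambda>x. X x * Y x) =
      expectation (\<lambda>x. (X x)\<^sup>2) * expectation (\<lambda>x. (Y x)\<^sup>2) - (expectation X * expectation Y)\<^sup>2"
proof -
  have ind2: "indep_var borel (\<lambda>x. (X x)\<^sup>2) borel (\<lambda>x. (Y x)\<^sup>2)"
    using indep_var_compose[OF ind, of "\<lambda>x. x\<^sup>2" borel "\<lambda>x. x\<^sup>2" borel]
    by (simp add: comp_def)
  show E: "expectation (\<lambda>x. X x * Y x) = expectation X * expectation Y"
    using indep_var_lebesgue_integral[OF ind X(1) Y(1)] .
  have "(\<lambda>x. (X x * Y x)\<^sup>2) = (\<lambda>x. (X x)\<^sup>2 * (Y x)\<^sup>2)"
    by (simp add: power_mult_distrib)
  then show "variance (\<lambda>x. X x * Y x) =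
      expectation (\<lambda>x. (X x)\<^sup>2) * expectation (\<lambda>x. (Y x)\<^sup>2) - (expectation X * expectation Y)\<^sup>2"
    using variance_eq[OF indep_var_integrable[OF ind X(1) Y(1)]] E
      indep_var_integrable[OF ind2 X(2) Y(2)] indep_var_lebesgue_integral[OF ind2 X(2) Y(2)]
    by simp
qed

lemma shrinking_concave_quadratic_less_iff:
  fixes c k A V lam :: real
  assumes "c < 1" and "0 < k"
  shows "k * A - lam / 2 * k\<^sup>2 * V < c * k * A - lam / 2 * (c * k)\<^sup>2 * V
    \<longleftrightarrow> 2 * A < lam * (1 + c) * k * V"
proof -
  have "(c * k * A - lam / 2 * (c * k)\<^sup>2 * V) - (k * A - lam / 2 * k\<^sup>2 * V)
      = ((1 - c) * k / 2) * (lam * (1 + c) * k * V - 2 * A)"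
    by (simp add: power2_eq_square field_simps)
  moreover have "0 < (1 - c) * k / 2"
    using assms by simp
  ultimately show ?thesis
    by (metis diff_gt_0_iff_gt zero_less_mult_iff not_less_iff_gr_or_eq)
qed

lemma uncertainty_aware_gain_iff:
  fixes n lam lam' mu s :: real
  assumes n: "0 < n" and lam: "0 < lam" and lam': "0 < lam'" and s: "0 < s"
  shows "2 * mu\<^sup>2 < lam * (1 + lam * n / (lam * n + lam')) * (1 / (lam * s\<^sup>2))
      * ((mu\<^sup>2 + s\<^sup>2 / n) * (mu\<^sup>2 + s\<^sup>2) - (mu\<^sup>2)\<^sup>2)
    \<longleftrightarrow> mu\<^sup>2 * (((n - 1) * lam' - 2 * n * lam) / (2 * n * lam + lam')) < s\<^sup>2"
proof -
  have ln: "0 < lam * n"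
    using lam n by simp
  have pos: "0 < n * (lam * n + lam')" "0 < 2 * n * lam + lam'"
    using n ln lam' by (simp_all add: mult.commute)
  have shrink: "1 + lam * n / (lam * n + lam') = (2 * lam * n + lam') / (lam * n + lam')"
    using ln lam' by (simp add: field_simps)
  have var: "(mu\<^sup>2 + s\<^sup>2 / n) * (mu\<^sup>2 + s\<^sup>2) - (mu\<^sup>2)\<^sup>2 = s\<^sup>2 * (mu\<^sup>2 * (n + 1) + s\<^sup>2) / n"
    using n by (simp add: field_simps power2_eq_square)
  have "lam * (1 + lam * n / (lam * n + lam')) * (1 / (lam * s\<^sup>2))
      * ((mu\<^sup>2 + s\<^sup>2 / n) * (mu\<^sup>2 + s\<^sup>2) - (mu\<^sup>2)\<^sup>2)
    = (2 * lam * n + lam') * (mu\<^sup>2 * (n + 1) + s\<^sup>2) / (n * (lam * n + lam'))"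
    unfolding shrink var using lam s by simp
  then have "2 * mu\<^sup>2 < lam * (1 + lam * n / (lam * n + lam')) * (1 / (lam * s\<^sup>2))
      * ((mu\<^sup>2 + s\<^sup>2 / n) * (mu\<^sup>2 + s\<^sup>2) - (mu\<^sup>2)\<^sup>2)
    \<longleftrightarrow> 2 * mu\<^sup>2 * (n * (lam * n + lam')) < (2 * lam * n + lam') * (mu\<^sup>2 * (n + 1) + s\<^sup>2)"
    using pos by (simp add: pos_less_divide_eq)
  also have "\<dots> \<longleftrightarrow> mu\<^sup>2 * ((n - 1) * lam' - 2 * n * lam) < s\<^sup>2 * (2 * n * lam + lam')"
    by (simp add: algebra_simps)
  also have "\<dots> \<longleftrightarrow> mu\<^sup>2 * (((n - 1) * lam' - 2 * n * lam) / (2 * n * lam + lam')) < s\<^sup>2"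
    using pos by (simp add: pos_divide_less_eq)
  finally show ?thesis .
qed

lemma uncertainty_aware_gain_if_small_aversion:
  fixes n lam lam' mu s :: real
  assumes n: "1 < n" and lam: "0 < lam" and lam': "0 < lam'" and s: "0 < s"
    and small: "lam' < 2 * n / (n - 1) * lam"
  shows "mu\<^sup>2 * (((n - 1) * lam' - 2 * n * lam) / (2 * n * lam + lam')) < s\<^sup>2"
proof -
  have "(n - 1) * lam' < 2 * n * lam"
    using small n by (simp add: field_simps)
  moreover have "0 < 2 * n * lam + lam'"
    using n lam lam' by (simp add: add_pos_pos mult_pos_pos)
  ultimately have "((n - 1) * lam' - 2 * n * lam) / (2 * n * lam + lam') \<le> 0"
    by (simp add: divide_nonpos_pos)
  then have "mu\<^sup>2 * (((n - 1) * lam' - 2 * n * lam) / (2 * n * lam + lam')) \<le> 0"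
    by (rule mult_nonneg_nonpos[OF zero_le_power2])
  also have "0 < s\<^sup>2"
    using s by simp
  finally show ?thesis .
qed

theorem lemmaB5:
  fixes M :: "'a measure" and N :: nat and lam lam' mu sig :: real
    and muhat dS :: "'a \<Rightarrow> real"
  assumes "prob_space M"
    and "N \<ge> 2" and "lam > 0" and "lam' > 0" and "sig > 0"
    and "distributed M lborel dS (normal_density mu sig)"
    and "distributed M lborel muhat (normal_density mu (sig / sqrt (real N)))"
    and "prob_space.indep_var M borel dS borel muhat"
  shows "((MeanVar M lam (\<lambda>w. a_ua N lam lam' sig (muhat w) * dS w)
            > MeanVar M lam (\<lambda>w. a_plugin lam sig (muhat w) * dS w))
          \<longleftrightarrow> mu\<^sup>2 * (((real N - 1) * lam' - 2 * real N * lam) / (2 * real N * lam + lam')) < sig\<^sup>2)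
         \<and> (lam' < 2 * real N / (real N - 1) * lam \<longrightarrow>
          MeanVar M lam (\<lambda>w. a_ua N lam lam' sig (muhat w) * dS w)
            > MeanVar M lam (\<lambda>w. a_plugin lam sig (muhat w) * dS w))"
proof -
  interpret prob_space M by fact
  have N: "1 < real N"
    using \<open>N \<ge> 2\<close> by simp
  have sig_N: "0 < sig / sqrt (real N)" "(sig / sqrt (real N))\<^sup>2 = sig\<^sup>2 / real N"
    using N \<open>sig > 0\<close> by (simp_all add: power_divide)
  note dS = normal_distributed_second_moment[OF \<open>sig > 0\<close> assms(6)]
  note muhat = normal_distributed_second_moment[OF sig_N(1) assms(7), unfolded sig_N(2)]
  define Z where "Z w = dS w * muhat w" for w
  define k where "k = 1 / (lam * sig\<^sup>2)"
  define c where "c = lam * real N / (lam * real N + lam')"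
  have EZ: "expectation Z = mu\<^sup>2"
    and VZ: "variance Z = (mu\<^sup>2 + sig\<^sup>2 / real N) * (mu\<^sup>2 + sig\<^sup>2) - (mu\<^sup>2)\<^sup>2"
    using indep_var_product_moments[OF assms(8) dS(1,2) muhat(1,2)] dS(3) muhat(3)
      normal_distributed_expectation[OF \<open>sig > 0\<close> assms(6)]
      normal_distributed_expectation[OF sig_N(1) assms(7)]
    by (simp_all add: Z_def[abs_def] power2_eq_square)
  have plugin: "(\<lambda>w. a_plugin lam sig (muhat w) * dS w) = (\<lambda>w. k * Z w)"
    and ua: "(\<lambda>w. a_ua N lam lam' sig (muhat w) * dS w) = (\<lambda>w. (c * k) * Z w)"
    by (simp_all add: a_ua_def a_plugin_def Z_def k_def c_def mult_ac)
  have "0 < lam * real N"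
    using N \<open>lam > 0\<close> by simp
  then have c: "c < 1"
    using \<open>lam' > 0\<close> by (simp add: c_def divide_less_eq)
  have k: "0 < k"
    using \<open>lam > 0\<close> \<open>sig > 0\<close> by (simp add: k_def)
  have "MeanVar M lam (\<lambda>w. a_ua N lam lam' sig (muhat w) * dS w)
      > MeanVar M lam (\<lambda>w. a_plugin lam sig (muhat w) * dS w)
    \<longleftrightarrow> mu\<^sup>2 * (((real N - 1) * lam' - 2 * real N * lam) / (2 * real N * lam + lam')) < sig\<^sup>2"
    \<comment> \<open>\<open>VZ\<close> must be used before \<open>EZ\<close> rewrites the mean inside \<open>variance Z\<close>.\<close>
    unfolding plugin ua MeanVar_mult_const VZ
    unfolding EZ shrinking_concave_quadratic_less_iff[OF c k]
    using uncertainty_aware_gain_iff[of "real N" lam lam' sig mu] N assms(3-5)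
    by (simp add: c_def k_def)
  then show ?thesis
    using uncertainty_aware_gain_if_small_aversion[OF N assms(3-5)] by blast
qed

end
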